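(* Let $(f,X)$ be a marked branched covering, let $\alpha$ be an arc satisfying the Blowing Up Conditions, let $n\ge1$, and let $(g,X)$ be obtained by blowing up $(f,X)$ $n$ times along $\alpha$. Suppose $\Lambda$ is an arc system in $(S^2,X)$ which is forward invariant under $f$ up to isotopy relative to $X$. If there exists a lift $\widetilde\Lambda$ under $f$ (of a subset of $\Lambda$) with $\widetilde\Lambda\simeq_X\Lambda$ and $\widetilde\Lambda\cap\mathrm{Int}(\alpha)=\emptyset$, then $\Lambda$ is forward invariant under $g$ up to isotopy relative to $X$.
   Context: Branched coverings of $S^2$ are orientation-preserving continuous maps locally of the form $z\mapsto z^k$, assumed postcritically finite; $C(f)$ is the critical set and $P(f)$ the closure of the union of its forward images. A marked branched covering $(f,X)$ has $X$ finite, $P(f)\subset X$, $f(X)\subset X$. An arc in $(S^2,Y)$ ($Y$ finite) is the image of $j:[0,1]\to S^2$ with $j(\{0,1\})\subset Y$ (endpoints $e$), $j|_{(0,1)}$ an embedding and $j((0,1))\cap Y=\emptyset$; $\simeq_Y$ is isotopy through such arcs. An arc system is a set of pairwise non-isotopic arcs in $(S^2,X)$; $\Lambda\simeq_X\Lambda'$ means each element of either is isotopic to a unique element of the other. A lift of an arc $\lambda$ under $f$ is the closure of a component of $f^{-1}(\lambda\setminus e(\lambda))$; a lift of an arc system $\Lambda_0$ is an arc system in $(S^2,X)$ whose elements are lifts of elements of $\Lambda_0$. $\Lambda$ is forward invariant under $f$ up to isotopy relative to $X$ if some subset $\Lambda_0\subset\Lambda$ has a lift $\widetilde\Lambda_0\simeq_X\Lambda$.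 Blowing Up Conditions for a closed embedded arc $\alpha$ with distinct endpoints $e_{\pm1}$: (1) $f|_\alpha$ is a homeomorphism; (2) $\alpha$ is a union of arcs $\alpha_1,\dots,\alpha_L$ in $(S^2,f^{-1}(X))$; (3) $\mathrm{Int}(\alpha)\cap(X\cup C(f))=\emptyset$. Blowing up $n$ times along $\alpha$: choose an open Jordan disc $W\supset\mathrm{Int}(\alpha)$ with $e(\alpha)\subset\partial W$, $\overline W\cap f^{-1}(X)=\alpha\cap f^{-1}(X)$, $f|_{\overline W}$ injective; choose a closed disc $D\subset W\cup e(\alpha)$ with $e(\alpha)\subset\partial D$ and a continuous map $c:S^2\setminus\mathrm{Int}(D)\to S^2$, the identity outside $W$, which is the extension of $h_1^{-1}$ for an isotopy $h_t$ ($h_0=\mathrm{id}$, $h_t=\mathrm{id}$ off $W$) of embeddings of $S^2\setminus\mathrm{Int}(\alpha)$ with $h_1(S^2\setminus\mathrm{Int}(\alpha))=S^2\setminus(D\setminus e(\alpha))$; $c$ maps each of the two boundary arcs $\partial D_\pm$ of $D$ from $e_{-1}$ to $e_{+1}$ homeomorphically onto $\alpha$. With $\phi_n(z)=A_2((A_1(z))^{2n})$ on the closed unit disc $\overline\Delta$, $A_1(z)=-i\frac{z+1}{z-1}$, $A_2(z)=\frac{z-1}{z+1}$, $\partial\Delta_\pm=\partial\Delta\cap\{\pm\mathrm{Im}z\ge0\}$, choose a homeomorphism $h'$ of the sphere with $h'([-1,1])=f(\alpha)$, $h'(\pm1)=f(e_{\pm1})$, and a homeomorphism $h'':D\to\overline\Delta$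 equal on $\partial D_\pm$ to $(\phi_n|_{\partial\Delta_\pm})^{-1}\circ(h')^{-1}\circ f\circ c$. Set $g=f\circ c$ on $S^2\setminus\mathrm{Int}(D)$ and $g=h'\circ\phi_n\circ h''$ on $D$. *)

theory Defs
  imports "HOL-Analysis.Analysis" "HOL-Complex_Analysis.Winding_Numbers"
begin

type_synonym pt = "real \<times> real \<times> real"

definition S2 :: "pt set" where
  "S2 = sphere 0 1"

definition north :: pt where "north = (0, 0, 1)"

text \<open>Stereographic projection from the north pole and its inverse
  (the inverse sends infinity, i.e. the north pole, nowhere: it is a map C -> S2 - {north}).\<close>
definition stereo :: "pt \<Rightarrow> complex" where
  "stereo x = Complex (fst x / (1 - snd (snd x))) (fst (snd x) / (1 - snd (snd x)))"

definition istereo :: "complex \<Rightarrow> pt" where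
  "istereo w = (2 * Re w / ((cmod w)\<^sup>2 + 1), 2 * Im w / ((cmod w)\<^sup>2 + 1),
                ((cmod w)\<^sup>2 - 1) / ((cmod w)\<^sup>2 + 1))"

text \<open>Orientation-preserving planar embeddings: small positively oriented circles
  are mapped to curves winding once (positively) around the image of the centre.\<close>
definition op_planar :: "(complex \<Rightarrow> complex) \<Rightarrow> complex set \<Rightarrow> bool" where
  "op_planar h A \<longleftrightarrow> (\<forall>z\<in>A. \<exists>e>0. \<forall>r. 0 < r \<and> r < e \<longrightarrow>
      cball z r \<subseteq> A \<and> winding_number (h \<circ> circlepath z r) (h z) = 1)"

text \<open>A chart of S2 is orientation-preserving (w.r.t. the orientation of S2 given by
  stereographic projection) if it is so when read in the stereographic coordinate.\<close>
definition op_chart :: "(pt \<Rightarrow> complex) \<Rightarrow> pt set \<Rightarrow> bool" where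
  "op_chart \<phi> U \<longleftrightarrow> op_planar (\<phi> \<circ> istereo) (stereo ` (U - {north}))"

definition local_form :: "(pt \<Rightarrow> pt) \<Rightarrow> pt \<Rightarrow> nat \<Rightarrow> bool" where
  "local_form f p k \<longleftrightarrow> (\<exists>U V \<phi> \<phi>' \<psi> \<psi>'.
      openin (top_of_set S2) U \<and> p \<in> U \<and> openin (top_of_set S2) V \<and> f p \<in> V \<and>
      homeomorphism U (ball 0 1) \<phi> \<phi>' \<and> homeomorphism V (ball 0 1) \<psi> \<psi>' \<and>
      op_chart \<phi> U \<and> op_chart \<psi> V \<and> \<phi> p = 0 \<and> \<psi> (f p) = 0 \<and>
      (\<forall>x\<in>U. \<psi> (f x) = (\<phi> x) ^ k))"

definition crit :: "(pt \<Rightarrow> pt) \<Rightarrow> pt set" where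
  "crit f = {p \<in> S2. \<exists>k\<ge>2. local_form f p k}"

definition postcrit :: "(pt \<Rightarrow> pt) \<Rightarrow> pt set" where
  "postcrit f = closure (\<Union>m\<in>{1..}. (f ^^ m) ` crit f)"

definition branched_covering :: "(pt \<Rightarrow> pt) \<Rightarrow> bool" where
  "branched_covering f \<longleftrightarrow> continuous_on S2 f \<and> f ` S2 \<subseteq> S2 \<and>
     (\<forall>p\<in>S2. \<exists>k\<ge>1. local_form f p k) \<and> finite (postcrit f)"

definition marked_bc :: "(pt \<Rightarrow> pt) \<Rightarrow> pt set \<Rightarrow> bool" where
  "marked_bc f X \<longleftrightarrow> branched_covering f \<and> finite X \<and> X \<subseteq> S2 \<and>
     postcrit f \<subseteq> X \<and> f ` X \<subseteq> X"

definition arc_param :: "pt set \<Rightarrow> (real \<Rightarrow> pt) \<Rightarrow> bool" where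
  "arc_param Y j \<longleftrightarrow> continuous_on {0..1} j \<and> j ` {0..1} \<subseteq> S2 \<and>
     j 0 \<in> Y \<and> j 1 \<in> Y \<and>
     (\<exists>j'. homeomorphism {0<..<1} (j ` {0<..<1}) j j') \<and>
     j ` {0<..<1} \<inter> Y = {}"

definition arc_in :: "pt set \<Rightarrow> pt set \<Rightarrow> bool" where
  "arc_in Y A \<longleftrightarrow> (\<exists>j. arc_param Y j \<and> A = j ` {0..1})"

definition arc_isotopic :: "pt set \<Rightarrow> pt set \<Rightarrow> pt set \<Rightarrow> bool" where
  "arc_isotopic Y A B \<longleftrightarrow> (\<exists>H :: real \<times> real \<Rightarrow> pt.
      continuous_on ({0..1} \<times> {0..1}) H \<and>
      (\<forall>t\<in>{0..1}. arc_param Y (\<lambda>s. H (t, s))) \<and>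
      A = (\<lambda>s. H (0, s)) ` {0..1} \<and> B = (\<lambda>s. H (1, s)) ` {0..1})"

definition arc_system :: "pt set \<Rightarrow> pt set set \<Rightarrow> bool" where
  "arc_system X \<Lambda> \<longleftrightarrow> (\<forall>la\<in>\<Lambda>. arc_in X la) \<and>
     (\<forall>la\<in>\<Lambda>. \<forall>\<mu>\<in>\<Lambda>. la \<noteq> \<mu> \<longrightarrow> \<not> arc_isotopic X la \<mu>)"

definition sys_isotopic :: "pt set \<Rightarrow> pt set set \<Rightarrow> pt set set \<Rightarrow> bool" where
  "sys_isotopic X L L' \<longleftrightarrow> (\<forall>la\<in>L. \<exists>!\<mu>. \<mu> \<in> L' \<and> arc_isotopic X la \<mu>) \<and>
     (\<forall>\<mu>\<in>L'. \<exists>!la. la \<in> L \<and> arc_isotopic X \<mu> la)"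

text \<open>Lift of an arc lambda in (S2,X): closure of a component of f^{-1}(lambda - e(lambda));
  the endpoints of an arc in (S2,X) are exactly its points in X.\<close>
definition lift_of :: "(pt \<Rightarrow> pt) \<Rightarrow> pt set \<Rightarrow> pt set \<Rightarrow> pt set \<Rightarrow> bool" where
  "lift_of f X la \<mu> \<longleftrightarrow> (\<exists>x \<in> S2 \<inter> f -` (la - X).
      \<mu> = closure (connected_component_set (S2 \<inter> f -` (la - X)) x))"

definition lift_system :: "(pt \<Rightarrow> pt) \<Rightarrow> pt set \<Rightarrow> pt set set \<Rightarrow> pt set set \<Rightarrow> bool" where
  "lift_system f X \<Lambda>0 L \<longleftrightarrow> arc_system X L \<and> (\<forall>\<mu>\<in>L. \<exists>la\<in>\<Lambda>0. lift_of f X la \<mu>)"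

definition forward_invariant :: "(pt \<Rightarrow> pt) \<Rightarrow> pt set \<Rightarrow> pt set set \<Rightarrow> bool" where
  "forward_invariant f X \<Lambda> \<longleftrightarrow>
     (\<exists>\<Lambda>0 \<subseteq> \<Lambda>. \<exists>L. lift_system f X \<Lambda>0 L \<and> sys_isotopic X L \<Lambda>)"

definition blowing_up_conditions :: "(pt \<Rightarrow> pt) \<Rightarrow> pt set \<Rightarrow> (real \<Rightarrow> pt) \<Rightarrow> bool" where
  "blowing_up_conditions f X j \<longleftrightarrow>
     continuous_on {0..1} j \<and> inj_on j {0..1} \<and> j ` {0..1} \<subseteq> S2 \<and>
     (\<exists>k. homeomorphism (j ` {0..1}) (f ` j ` {0..1}) f k) \<and>
     (\<exists>(L::nat) (as :: nat \<Rightarrow> pt set). L \<ge> 1 \<and> (\<forall>i<L. arc_in (S2 \<inter> f -` X) (as i)) \<and> j ` {0..1} = (\<Union>i<L. as i)) \<and>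
     j ` {0<..<1} \<inter> (X \<union> crit f) = {}"

definition jordan_open_disc :: "pt set \<Rightarrow> bool" where
  "jordan_open_disc W \<longleftrightarrow> (\<exists>\<gamma>. simple_path \<gamma> \<and> pathfinish \<gamma> = pathstart \<gamma> \<and>
     path_image \<gamma> \<subseteq> S2 \<and>
     (\<exists>x \<in> S2 - path_image \<gamma>. W = connected_component_set (S2 - path_image \<gamma>) x))"

definition simple_arc_from_to :: "pt set \<Rightarrow> pt \<Rightarrow> pt \<Rightarrow> bool" where
  "simple_arc_from_to A a b \<longleftrightarrow> (\<exists>j :: real \<Rightarrow> pt. continuous_on {0..1} j \<and> inj_on j {0..1} \<and>
     j 0 = a \<and> j 1 = b \<and> A = j ` {0..1})"

definition A1 :: "complex \<Rightarrow> complex" where "A1 z = - \<i> * (z + 1) / (z - 1)"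
definition A2 :: "complex \<Rightarrow> complex" where "A2 z = (z - 1) / (z + 1)"

text \<open>phi_n(z) = A2((A1 z)^(2n)) as a map of the closed unit disc into the Riemann sphere S2
  (via inverse stereographic projection, infinity = north pole), with the values at the
  poles of A1 and A2 given by continuity.\<close>
definition phi_n :: "nat \<Rightarrow> complex \<Rightarrow> pt" where
  "phi_n n z = (if z = 1 then istereo 1
               else if (A1 z) ^ (2 * n) = -1 then north
               else istereo (A2 ((A1 z) ^ (2 * n))))"

definition disc_plus :: "complex set" where "disc_plus = {z. cmod z = 1 \<and> Im z \<ge> 0}"
definition disc_minus :: "complex set" where "disc_minus = {z. cmod z = 1 \<and> Im z \<le> 0}"

definition blown_up :: "(pt \<Rightarrow> pt) \<Rightarrow> pt set \<Rightarrow> (real \<Rightarrow> pt) \<Rightarrow> nat \<Rightarrow> (pt \<Rightarrow> pt) \<Rightarrow> bool" where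
  "blown_up f X j n g \<longleftrightarrow>
    (let \<alpha> = j ` {0..1}; I\<alpha> = j ` {0<..<1}; em = j 0; ep = j 1 in
     \<exists>W D \<psi> \<psi>' Dp Dm h c h' h'i h''.
       \<comment> \<open>the open Jordan disc W\<close>
       jordan_open_disc W \<and> I\<alpha> \<subseteq> W \<and> {em, ep} \<subseteq> closure W - W \<and>
       closure W \<inter> (S2 \<inter> f -` X) = \<alpha> \<inter> (S2 \<inter> f -` X) \<and> inj_on f (closure W) \<and>
       \<comment> \<open>the closed disc D, with interior psi(ball) and boundary psi(circle)\<close>
       homeomorphism (cball (0::complex) 1) D \<psi> \<psi>' \<and> D \<subseteq> W \<union> {em, ep} \<and>
       {em, ep} \<subseteq> \<psi> ` sphere 0 1 \<and>
       \<comment> \<open>its two boundary arcs from e_{-1} to e_{+1}\<close>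
       Dp \<union> Dm = \<psi> ` sphere 0 1 \<and> Dp \<inter> Dm = {em, ep} \<and>
       simple_arc_from_to Dp em ep \<and> simple_arc_from_to Dm em ep \<and>
       \<comment> \<open>the isotopy h_t of embeddings of S2 - Int(alpha)\<close>
       continuous_on ({0..1::real} \<times> (S2 - I\<alpha>)) (\<lambda>(t, x). h t x) \<and>
       (\<forall>t\<in>{0..1}. h t ` (S2 - I\<alpha>) \<subseteq> S2 \<and>
          (\<exists>k. homeomorphism (S2 - I\<alpha>) (h t ` (S2 - I\<alpha>)) (h t) k)) \<and>
       (\<forall>x\<in>S2 - I\<alpha>. h 0 x = x) \<and>
       (\<forall>t\<in>{0..1}. \<forall>x\<in>S2 - I\<alpha> - W. h t x = x) \<and>
       h 1 ` (S2 - I\<alpha>) = S2 - (D - {em, ep}) \<and>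
       \<comment> \<open>the map c, extension of h_1^{-1}\<close>
       continuous_on (S2 - \<psi> ` ball 0 1) c \<and> c ` (S2 - \<psi> ` ball 0 1) \<subseteq> S2 \<and>
       (\<forall>x\<in>S2 - (D - {em, ep}). c x = inv_into (S2 - I\<alpha>) (h 1) x) \<and>
       (\<forall>x\<in>S2 - \<psi> ` ball 0 1 - W. c x = x) \<and>
       (\<exists>k. homeomorphism Dp \<alpha> c k) \<and> (\<exists>k. homeomorphism Dm \<alpha> c k) \<and>
       \<comment> \<open>the homeomorphism h' of the sphere\<close>
       homeomorphism S2 S2 h' h'i \<and>
       h' ` (istereo ` (complex_of_real ` {-1..1})) = f ` \<alpha> \<and>
       h' (istereo (-1)) = f em \<and> h' (istereo 1) = f ep \<and>
       \<comment> \<open>the homeomorphism h'' of D onto the closed unit disc\<close>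
       (\<exists>k. homeomorphism D (cball 0 1) h'' k) \<and>
       (\<forall>x\<in>Dp. h'' x = inv_into disc_plus (phi_n n) (inv_into S2 h' (f (c x)))) \<and>
       (\<forall>x\<in>Dm. h'' x = inv_into disc_minus (phi_n n) (inv_into S2 h' (f (c x)))) \<and>
       \<comment> \<open>the resulting map g\<close>
       (\<forall>x\<in>S2 - \<psi> ` ball 0 1. g x = f (c x)) \<and>
       (\<forall>x\<in>D. g x = h' (phi_n n (h'' x))))"

end

theory Submission
  imports Defs "HOL-Complex_Analysis.Complex_Analysis"
begin

(* Off the interior of alpha the blow-up changes f only by an isotopy: g (h_1 w) = f w for
   w outside Int(alpha), where h_t is the isotopy of the construction, and h_t fixes X since X
   misses the disc W supporting it. A lift L of Lambda_0 under f avoiding Int(alpha) is thus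
   moved by h_1 to a lift h_1(L) of the same arcs under g, and h_t isotopes every arc of L to
   its image through arcs in (S2, X), so h_1(L) is isotopic to L and hence to Lambda.
   The topological input is that h_1 maps components of f^-1(lambda - X) onto components of
   g^-1(lambda - X); this holds because these components are open, which in turn follows from
   the local form z -> z^k of f. *)

section \<open>Power maps and components\<close>

lemma open_power_image:
  fixes G :: "complex set"
  assumes "open G" "k \<ge> 1"
  shows "open ((\<lambda>z. z ^ k) ` G)"
proof (rule open_mapping_thm[where S=UNIV])
  show "\<not> (\<lambda>z::complex. z ^ k) constant_on UNIV"
  proof
    assume "(\<lambda>z::complex. z ^ k) constant_on UNIV"
    then obtain c where "\<And>z::complex. z ^ k = c" unfolding constant_on_def by blast
    from this[of 0] this[of 1] assms(2) show False by (cases k) auto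
  qed
qed (use assms in \<open>auto intro: holomorphic_intros\<close>)

lemma compact_power_preimage:
  fixes T :: "complex set"
  assumes "compact T" "k \<ge> 1"
  shows "compact {z. z ^ k \<in> T}"
proof -
  obtain B where B: "\<And>t. t \<in> T \<Longrightarrow> norm t \<le> B"
    using compact_imp_bounded[OF assms(1)] bounded_iff by blast
  have "norm z \<le> max 1 B" if "z ^ k \<in> T" for z :: complex
  proof (cases "norm z \<le> 1")
    case False
    then have "norm z \<le> norm z ^ k"
      using assms(2) by (metis less_eq_real_def not_le power_increasing power_one_right)
    also have "\<dots> \<le> B" using B[OF that] by (simp add: norm_power)
    finally show ?thesis by simp
  qed simp
  then have "bounded {z. z ^ k \<in> T}" unfolding bounded_iff by blast
  moreover have "closed {z::complex. z ^ k \<in> T}"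
    using closed_vimage[OF compact_imp_closed[OF assms(1)], of "\<lambda>z::complex. z ^ k"]
    by (simp add: vimage_def continuous_on_power continuous_on_id)
  ultimately show ?thesis by (simp add: compact_eq_bounded_closed)
qed

text \<open>Being open and proper, \<open>z \<mapsto> z ^ k\<close> maps every nonempty clopen part of the preimage
  onto the connected set \<open>T\<close>; so every such part contains the only root \<open>0\<close>, and two
  complementary parts cannot both do so.\<close>

lemma connected_power_preimage:
  fixes T :: "complex set"
  assumes T: "compact T" "connected T" "0 \<in> T" and k: "k \<ge> 1"
  shows "connected {z. z ^ k \<in> T}"
proof -
  define S where "S = {z::complex. z ^ k \<in> T}"
  let ?p = "\<lambda>z::complex. z ^ k"
  have zero_in: "0 \<in> E"
    if E: "openin (top_of_set S) E" "closedin (top_of_set S) E" "E \<noteq> {}" for E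
  proof -
    have sub: "?p ` E \<subseteq> T" using closedin_imp_subset[OF E(2)] by (auto simp: S_def)
    have "compact E"
      using E(2) compact_power_preimage[OF T(1) k] closedin_compact unfolding S_def by blast
    then have "compact (?p ` E)" by (intro compact_continuous_image continuous_intros)
    then have closed: "closedin (top_of_set T) (?p ` E)"
      using sub by (simp add: closed_subset compact_imp_closed)
    obtain G where G: "open G" "E = S \<inter> G" using E(1) by (auto simp: openin_open)
    have "?p ` E = T \<inter> ?p ` G" using G by (auto simp: S_def)
    then have "openin (top_of_set T) (?p ` E)"
      using open_power_image[OF G(1) k] by (auto simp: openin_open)
    then have "?p ` E = T" using T(2) closed E(3) unfolding connected_clopen by blast
    then obtain z where "z \<in> E" "z ^ k = 0" using T(3) by (metis imageE)
    then show ?thesis using k by simp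
  qed
  show ?thesis unfolding S_def[symmetric] connected_clopen
  proof (intro allI impI)
    fix E assume E: "openin (top_of_set S) E \<and> closedin (top_of_set S) E"
    show "E = {} \<or> E = S"
    proof (rule ccontr)
      assume nontrivial: "\<not> (E = {} \<or> E = S)"
      have "openin (top_of_set S) (S - E)" "closedin (top_of_set S) (S - E)" "S - E \<noteq> {}"
        using E nontrivial closedin_imp_subset openin_imp_subset
        by (auto intro: openin_diff closedin_diff)
      then have "0 \<in> S - E" by (rule zero_in)
      moreover have "0 \<in> E" using E nontrivial zero_in by blast
      ultimately show False by blast
    qed
  qed
qed

lemma connected_component_eq_clopen:
  assumes T: "connected T" "x \<in> T" and clopen: "openin (top_of_set S) T" "closedin (top_of_set S) T"
  shows "connected_component_set S x = T"
proof -
  let ?K = "connected_component_set S x"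
  have TK: "T \<subseteq> ?K"
    using connected_component_maximal[OF T(2,1) closedin_imp_subset[OF clopen(2)]] .
  have KS: "?K \<subseteq> S" by (rule connected_component_subset)
  have "openin (top_of_set ?K) T" by (rule openin_subset_trans[OF clopen(1) TK KS])
  moreover have "closedin (top_of_set ?K) T" by (rule closedin_subset_trans[OF clopen(2) TK KS])
  ultimately have "T = {} \<or> T = ?K"
    using connected_connected_component[of S x] unfolding connected_clopen by blast
  then show ?thesis using T(2) by blast
qed

lemma closure_image_compact_closure:
  fixes f :: "'a::topological_space \<Rightarrow> 'b::t2_space"
  assumes "compact (closure S)" "continuous_on (closure S) f"
  shows "closure (f ` S) = f ` closure S"
proof
  have "compact (f ` closure S)" using assms by (rule compact_continuous_image[rotated])
  then show "closure (f ` S) \<subseteq> f ` closure S"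
    by (intro closure_minimal image_mono closure_subset compact_imp_closed)
  show "f ` closure S \<subseteq> closure (f ` S)"
    using assms(2) by (rule image_closure_subset) (simp_all add: closure_subset)
qed

section \<open>Lifts of arcs\<close>

lemma arc_param_inj_interior:
  assumes "arc_param X q" "s \<in> {0<..<1}" "t \<in> {0<..<1}" "q s = q t"
  shows "s = t"
  using assms unfolding arc_param_def by (metis homeomorphism_apply1)

text \<open>The piece is the image of a short parameter interval around the point; the image of the
  rest of the parameter interval is compact, and \<open>U\<close> is its complement.\<close>

lemma arc_local_piece:
  assumes q: "arc_param X q" and a: "a \<in> q ` {0..1} - X" and G: "open G" "a \<in> G"
  obtains \<Gamma> U where "compact \<Gamma>" "connected \<Gamma>" "a \<in> \<Gamma>" "\<Gamma> \<subseteq> (q ` {0..1} - X) \<inter> G"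
    "open U" "a \<in> U" "q ` {0..1} \<inter> U \<subseteq> \<Gamma>"
proof -
  have qc: "continuous_on {0..1} q" and q01: "q 0 \<in> X" "q 1 \<in> X"
    and qX: "q ` {0<..<1} \<inter> X = {}"
    using q unfolding arc_param_def by auto
  obtain s0 where s0: "s0 \<in> {0<..<1}" "q s0 = a"
    using a q01 by (metis DiffE atLeastAtMost_iff greaterThanLessThan_iff image_iff order_le_less)
  have "openin (top_of_set {0..1}) ({0..1} \<inter> q -` G)"
    using continuous_openin_preimage_gen[OF qc G(1)] .
  moreover have "s0 \<in> {0..1} \<inter> q -` G" using s0 G(2) by auto
  ultimately obtain e where e: "e > 0" "\<And>s. s \<in> {0..1} \<Longrightarrow> dist s s0 < e \<Longrightarrow> q s \<in> G"
    unfolding openin_euclidean_subtopology_iff by blast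
  define \<delta> where "\<delta> = min (e/2) (min (s0/2) ((1-s0)/2))"
  have \<delta>: "\<delta> > 0" "\<delta> < e" "\<delta> < s0" "\<delta> < 1 - s0" unfolding \<delta>_def using e s0 by (auto simp: min_def)
  define I where "I = {s0-\<delta>..s0+\<delta>}"
  have I: "I \<subseteq> {0<..<1}" unfolding I_def using \<delta> by auto
  then have I01: "I \<subseteq> {0..1}" by auto
  define Rest where "Rest = q ` ({0..s0-\<delta>} \<union> {s0+\<delta>..1})"
  show ?thesis
  proof
    show "compact (q ` I)" "connected (q ` I)"
      using continuous_on_subset[OF qc I01] unfolding I_def
      by (auto intro: compact_continuous_image connected_continuous_image)
    show "a \<in> q ` I" unfolding I_def using s0 \<delta> by force
    show "q ` I \<subseteq> (q ` {0..1} - X) \<inter> G"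
    proof (intro image_subsetI)
      fix s assume s: "s \<in> I"
      then have "dist s s0 < e" using \<delta> unfolding I_def dist_real_def by auto
      then show "q s \<in> (q ` {0..1} - X) \<inter> G" using s I I01 qX e(2) by blast
    qed
    have "compact Rest" unfolding Rest_def
      using continuous_on_subset[OF qc] \<delta> by (intro compact_continuous_image) auto
    then show "open (- Rest)" by (simp add: compact_imp_closed open_Compl)
    show "a \<in> - Rest"
    proof
      assume "a \<in> Rest"
      then obtain s where s: "s \<in> {0..s0-\<delta>} \<union> {s0+\<delta>..1}" "q s = a" unfolding Rest_def by blast
      with a q01 \<delta> s0 have "s \<in> {0<..<1}" by (cases "s = 0 \<or> s = 1") auto
      then have "s = s0" using arc_param_inj_interior[OF q _ s0(1)] s s0 by auto
      then show False using s \<delta> by auto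
    qed
    show "q ` {0..1} \<inter> - Rest \<subseteq> q ` I"
      unfolding Rest_def I_def by force
  qed
qed

lemma connected_preimage_in_power_charts:
  fixes \<phi> :: "'a::topological_space \<Rightarrow> complex" and \<psi> :: "'b::topological_space \<Rightarrow> complex"
  assumes hU: "homeomorphism U (ball 0 1) \<phi> \<phi>'" and hV: "homeomorphism V (ball 0 1) \<psi> \<psi>'"
    and power: "\<forall>x\<in>U. \<psi> (f x) = \<phi> x ^ k" and k: "k \<ge> 1"
    and U0: "U0 \<subseteq> U" "f ` U0 \<subseteq> V" and r: "r > 0" "ball 0 r \<subseteq> \<phi> ` U0"
    and \<Gamma>: "compact \<Gamma>" "connected \<Gamma>" "\<Gamma> \<subseteq> V" "0 \<in> \<psi> ` \<Gamma>" "\<psi> ` \<Gamma> \<subseteq> ball 0 (r ^ k)"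
  shows "connected (U0 \<inter> f -` \<Gamma>)"
proof -
  define P0 where "P0 = {z. z ^ k \<in> \<psi> ` \<Gamma>}"
  have "connected P0" unfolding P0_def
  proof (rule connected_power_preimage[OF _ _ \<Gamma>(4) k])
    have "continuous_on \<Gamma> \<psi>" using continuous_on_subset[OF homeomorphism_cont1[OF hV] \<Gamma>(3)] .
    then show "compact (\<psi> ` \<Gamma>)" "connected (\<psi> ` \<Gamma>)"
      using \<Gamma>(1,2) by (auto intro: compact_continuous_image connected_continuous_image)
  qed
  have P0U0: "P0 \<subseteq> \<phi> ` U0"
  proof
    fix z assume "z \<in> P0"
    then have "z ^ k \<in> ball 0 (r ^ k)" using \<Gamma>(5) unfolding P0_def by blast
    then have "norm z ^ k < r ^ k" by (simp add: norm_power)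
    then have "norm z < r" by (rule power_less_imp_less_base) (use r in simp)
    then show "z \<in> \<phi> ` U0" using r by auto
  qed
  have \<phi>\<phi>': "\<And>x. x \<in> U \<Longrightarrow> \<phi>' (\<phi> x) = x" using hU by (rule homeomorphism_apply1)
  have \<psi>\<psi>': "\<And>y. y \<in> V \<Longrightarrow> \<psi>' (\<psi> y) = y" using hV by (rule homeomorphism_apply1)
  have "U0 \<inter> f -` \<Gamma> = \<phi>' ` P0"
  proof
    show "U0 \<inter> f -` \<Gamma> \<subseteq> \<phi>' ` P0"
    proof
      fix x assume x: "x \<in> U0 \<inter> f -` \<Gamma>"
      then have "\<psi> (f x) \<in> \<psi> ` \<Gamma>" by blast
      moreover have "\<psi> (f x) = \<phi> x ^ k" using power x U0(1) by blast
      ultimately have "\<phi> x \<in> P0" unfolding P0_def by simp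
      moreover have "\<phi>' (\<phi> x) = x" using \<phi>\<phi>' x U0(1) by blast
      ultimately show "x \<in> \<phi>' ` P0" by (metis image_eqI)
    qed
    show "\<phi>' ` P0 \<subseteq> U0 \<inter> f -` \<Gamma>"
    proof
      fix y assume "y \<in> \<phi>' ` P0"
      then obtain x where x: "x \<in> U0" "\<phi> x \<in> P0" "y = \<phi>' (\<phi> x)" using P0U0 by blast
      then have "y = x" using \<phi>\<phi>' U0(1) by blast
      from x(2) obtain \<gamma> where \<gamma>: "\<gamma> \<in> \<Gamma>" "\<phi> x ^ k = \<psi> \<gamma>" unfolding P0_def by blast
      have "f x \<in> V" using x U0(2) by blast
      then have "f x = \<psi>' (\<psi> (f x))" using \<psi>\<psi>' by simp
      also have "\<dots> = \<psi>' (\<psi> \<gamma>)" using power x(1) U0(1) \<gamma>(2) by auto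
      also have "\<dots> = \<gamma>" using \<psi>\<psi>' \<Gamma>(3) \<gamma>(1) by blast
      finally show "y \<in> U0 \<inter> f -` \<Gamma>" using x(1) \<gamma>(1) \<open>y = x\<close> by simp
    qed
  qed
  moreover have "P0 \<subseteq> ball 0 1"
    using P0U0 image_mono[OF U0(1), of \<phi>] homeomorphism_image1[OF hU] by blast
  then have "connected (\<phi>' ` P0)"
    using connected_continuous_image[OF continuous_on_subset[OF homeomorphism_cont2[OF hU]]]
      \<open>connected P0\<close> by blast
  ultimately show ?thesis by simp
qed

text \<open>In charts where \<open>f\<close> is \<open>z \<mapsto> z ^ k\<close>, the part of the lift lying over a small
  connected piece of the arc through \<open>f w\<close> is connected, and it contains every point of the
  lift near \<open>w\<close>.\<close>

lemma lift_component_nbhd: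
  assumes fc: "continuous_on S2 f" and fS: "f ` S2 \<subseteq> S2"
    and lf: "local_form f w k" and k: "k \<ge> 1"
    and q: "arc_param X q" and w: "w \<in> S2" "f w \<in> q ` {0..1} - X"
  defines "Y \<equiv> S2 \<inter> f -` (q ` {0..1} - X)"
  obtains N where "openin (top_of_set S2) N" "w \<in> N" "Y \<inter> N \<subseteq> connected_component_set Y w"
proof -
  obtain U V \<phi> \<phi>' \<psi> \<psi>' where U: "openin (top_of_set S2) U" "w \<in> U"
    and V: "openin (top_of_set S2) V" "f w \<in> V"
    and hU: "homeomorphism U (ball (0::complex) 1) \<phi> \<phi>'"
    and hV: "homeomorphism V (ball (0::complex) 1) \<psi> \<psi>'"
    and zero: "\<phi> w = 0" "\<psi> (f w) = 0" and power: "\<forall>x\<in>U. \<psi> (f x) = (\<phi> x) ^ k"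
    using lf unfolding local_form_def by blast
  have US: "U \<subseteq> S2" using U openin_imp_subset by blast
  have "f \<in> S2 \<rightarrow> S2" using fS by auto
  define U0 where "U0 = U \<inter> (S2 \<inter> f -` V)"
  have U0: "openin (top_of_set S2) U0" "w \<in> U0" "U0 \<subseteq> U" "f ` U0 \<subseteq> V"
    using U V w continuous_openin_preimage[OF fc \<open>f \<in> S2 \<rightarrow> S2\<close> V(1)] unfolding U0_def by auto
  then have "openin (top_of_set U) U0" using openin_subset_trans[OF _ _ US] by blast
  then have "openin (top_of_set (ball 0 1)) (\<phi> ` U0)" by (rule homeomorphism_imp_open_map[OF hU])
  then have "open (\<phi> ` U0)" by (simp add: openin_open_eq)
  moreover have "0 \<in> \<phi> ` U0" using U0 zero by force
  ultimately obtain r where r: "r > 0" "ball 0 r \<subseteq> \<phi> ` U0"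
    using open_contains_ball by blast
  obtain G where G: "open G" "V \<inter> \<psi> -` ball 0 (r ^ k) = S2 \<inter> G"
  proof -
    have "openin (top_of_set V) (V \<inter> \<psi> -` ball 0 (r ^ k))"
      using hV by (intro continuous_openin_preimage_gen) (auto simp: homeomorphism_def)
    then have "openin (top_of_set S2) (V \<inter> \<psi> -` ball 0 (r ^ k))" using V(1) openin_trans by blast
    then show ?thesis using that by (auto simp: openin_open)
  qed
  have "f w \<in> G" using G V zero r by auto
  then obtain \<Gamma> Ob where \<Gamma>: "compact \<Gamma>" "connected \<Gamma>" "f w \<in> \<Gamma>" "\<Gamma> \<subseteq> (q ` {0..1} - X) \<inter> G"
    and Ob: "open Ob" "f w \<in> Ob" "q ` {0..1} \<inter> Ob \<subseteq> \<Gamma>"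
    using arc_local_piece[OF q w(2) G(1)] by blast
  have \<Gamma>S: "\<Gamma> \<subseteq> S2" using \<Gamma>(4) q unfolding arc_param_def by auto
  then have \<Gamma>V: "\<Gamma> \<subseteq> V" and \<Gamma>r: "\<psi> ` \<Gamma> \<subseteq> ball 0 (r ^ k)" using \<Gamma>(4) G(2) by blast+
  have "0 \<in> \<psi> ` \<Gamma>" using \<Gamma>(3) zero by force
  with \<Gamma>(1,2) \<Gamma>V \<Gamma>r have "connected (U0 \<inter> f -` \<Gamma>)"
    by (intro connected_preimage_in_power_charts[OF hU hV power k U0(3,4) r])
  moreover have "w \<in> U0 \<inter> f -` \<Gamma>" using U0(2) \<Gamma>(3) by blast
  moreover have "U0 \<inter> f -` \<Gamma> \<subseteq> Y" using U0(3) US \<Gamma>(4) unfolding Y_def by blast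
  ultimately have component: "U0 \<inter> f -` \<Gamma> \<subseteq> connected_component_set Y w"
    by (meson connected_component_maximal)
  show ?thesis
  proof
    show "openin (top_of_set S2) (U0 \<inter> (S2 \<inter> f -` Ob))"
      using U0(1) continuous_openin_preimage_gen[OF fc Ob(1)] by blast
    show "w \<in> U0 \<inter> (S2 \<inter> f -` Ob)" using U0 w Ob by auto
    have "Y \<inter> (U0 \<inter> (S2 \<inter> f -` Ob)) \<subseteq> U0 \<inter> f -` \<Gamma>" using Ob(3) unfolding Y_def by auto
    then show "Y \<inter> (U0 \<inter> (S2 \<inter> f -` Ob)) \<subseteq> connected_component_set Y w" using component by blast
  qed
qed

lemma openin_lift_component:
  assumes "continuous_on S2 f" "f ` S2 \<subseteq> S2" "\<forall>p\<in>S2. \<exists>k\<ge>1. local_form f p k"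
    and "arc_param X q"
  defines "Y \<equiv> S2 \<inter> f -` (q ` {0..1} - X)"
  shows "openin (top_of_set Y) (connected_component_set Y x)"
  unfolding openin_subopen[of _ "connected_component_set Y x"]
proof
  fix w assume w: "w \<in> connected_component_set Y x"
  then have "w \<in> Y" using connected_component_subset by blast
  then obtain N where "openin (top_of_set S2) N" "w \<in> N" "Y \<inter> N \<subseteq> connected_component_set Y w"
    using assms lift_component_nbhd[of f w _ X q] unfolding Y_def by (metis IntE vimageE)
  moreover have "connected_component_set Y w = connected_component_set Y x"
    using w by (metis connected_component_eq)
  moreover have "openin (top_of_set Y) (Y \<inter> N)"
  proof -
    obtain T where "open T" "N = S2 \<inter> T" using \<open>openin (top_of_set S2) N\<close> by (auto simp: openin_open)
    moreover have "Y \<subseteq> S2" unfolding Y_def by blast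
    ultimately have "Y \<inter> N = Y \<inter> T" by blast
    then show ?thesis using \<open>open T\<close> by (simp add: openin_open_Int)
  qed
  ultimately show "\<exists>T. openin (top_of_set Y) T \<and> w \<in> T \<and> T \<subseteq> connected_component_set Y x"
    using \<open>w \<in> Y\<close> by blast
qed

section \<open>Isotopies of arcs\<close>

text \<open>Composing isotopies of arcs needs the parametrisations: two isotopies meeting in the same
  arc may end and start with different parametrisations of it.\<close>

definition param_isotopic :: "pt set \<Rightarrow> (real \<Rightarrow> pt) \<Rightarrow> (real \<Rightarrow> pt) \<Rightarrow> bool" where
  "param_isotopic X p q \<longleftrightarrow> (\<exists>H :: real \<times> real \<Rightarrow> pt. continuous_on ({0..1} \<times> {0..1}) H \<and>
      (\<forall>t\<in>{0..1}. arc_param X (\<lambda>s. H (t, s))) \<and>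
      (\<forall>s\<in>{0..1}. H (0, s) = p s \<and> H (1, s) = q s))"

lemma arc_isotopic_iff_param_isotopic:
  "arc_isotopic X A B \<longleftrightarrow> (\<exists>p q. param_isotopic X p q \<and> A = p ` {0..1} \<and> B = q ` {0..1})"
proof
  assume "arc_isotopic X A B"
  then obtain H :: "real \<times> real \<Rightarrow> pt" where "continuous_on ({0..1} \<times> {0..1}) H"
      "\<forall>t\<in>{0..1}. arc_param X (\<lambda>s. H (t, s))"
      "A = (\<lambda>s. H (0, s)) ` {0..1}" "B = (\<lambda>s. H (1, s)) ` {0..1}"
    unfolding arc_isotopic_def by blast
  then show "\<exists>p q. param_isotopic X p q \<and> A = p ` {0..1} \<and> B = q ` {0..1}"
    unfolding param_isotopic_def by (intro exI[of _ "\<lambda>s. H (0, s)"] exI[of _ "\<lambda>s. H (1, s)"]) blast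
next
  assume "\<exists>p q. param_isotopic X p q \<and> A = p ` {0..1} \<and> B = q ` {0..1}"
  then obtain p q and H :: "real \<times> real \<Rightarrow> pt" where H: "continuous_on ({0..1} \<times> {0..1}) H"
      "\<forall>t\<in>{0..1}. arc_param X (\<lambda>s. H (t, s))"
      "\<forall>s\<in>{0..1}. H (0, s) = p s \<and> H (1, s) = q s" and AB: "A = p ` {0..1}" "B = q ` {0..1}"
    unfolding param_isotopic_def by blast
  have "A = (\<lambda>s. H (0, s)) ` {0..1}" "B = (\<lambda>s. H (1, s)) ` {0..1}"
    using H(3) AB by (auto intro!: image_cong)
  then show "arc_isotopic X A B" unfolding arc_isotopic_def using H(1,2) by blast
qed

lemma param_isotopic_sym:
  assumes "param_isotopic X p q"
  shows "param_isotopic X q p"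
proof -
  obtain H :: "real \<times> real \<Rightarrow> pt" where H: "continuous_on ({0..1} \<times> {0..1}) H"
      "\<forall>t\<in>{0..1}. arc_param X (\<lambda>s. H (t, s))"
      "\<forall>s\<in>{0..1}. H (0, s) = p s \<and> H (1, s) = q s"
    using assms unfolding param_isotopic_def by blast
  define G where "G = (\<lambda>x::real\<times>real. H (1 - fst x, snd x))"
  have "continuous_on ({0..1} \<times> {0..1}) G" unfolding G_def
    by (rule continuous_on_compose2[OF H(1)]) (auto intro!: continuous_intros)
  moreover have "\<forall>t\<in>{0..1}. arc_param X (\<lambda>s. G (t, s))"
    using H(2) unfolding G_def by auto
  moreover have "\<forall>s\<in>{0..1}. G (0, s) = q s \<and> G (1, s) = p s"
    using H(3) unfolding G_def by auto
  ultimately show ?thesis unfolding param_isotopic_def by blast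
qed

lemma arc_isotopic_sym: "arc_isotopic X A B \<Longrightarrow> arc_isotopic X B A"
  unfolding arc_isotopic_iff_param_isotopic using param_isotopic_sym by blast

lemma param_isotopic_trans:
  assumes "param_isotopic X p q" "param_isotopic X q r"
  shows "param_isotopic X p r"
proof -
  obtain H1 :: "real \<times> real \<Rightarrow> pt" where H1: "continuous_on ({0..1} \<times> {0..1}) H1"
      "\<forall>t\<in>{0..1}. arc_param X (\<lambda>s. H1 (t, s))"
      "\<forall>s\<in>{0..1}. H1 (0, s) = p s \<and> H1 (1, s) = q s"
    using assms(1) unfolding param_isotopic_def by blast
  obtain H2 :: "real \<times> real \<Rightarrow> pt" where H2: "continuous_on ({0..1} \<times> {0..1}) H2"
      "\<forall>t\<in>{0..1}. arc_param X (\<lambda>s. H2 (t, s))"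
      "\<forall>s\<in>{0..1}. H2 (0, s) = q s \<and> H2 (1, s) = r s"
    using assms(2) unfolding param_isotopic_def by blast
  define G where "G = (\<lambda>x::real\<times>real.
    if fst x \<le> 1/2 then H1 (2 * fst x, snd x) else H2 (2 * fst x - 1, snd x))"
  have "continuous_on ({0..1} \<times> {0..1}) G" unfolding G_def
  proof (rule continuous_on_cases_le)
    show "continuous_on {x \<in> {0..1} \<times> {0..1}. fst x \<le> 1 / 2} (\<lambda>x. H1 (2 * fst x, snd x))"
      by (rule continuous_on_compose2[OF H1(1)]) (auto intro!: continuous_intros)
    show "continuous_on {x \<in> {0..1} \<times> {0..1}. 1 / 2 \<le> fst x} (\<lambda>x. H2 (2 * fst x - 1, snd x))"
      by (rule continuous_on_compose2[OF H2(1)]) (auto intro!: continuous_intros)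
    show "continuous_on ({0..1} \<times> {0..1}) fst" by (intro continuous_intros)
    fix x :: "real \<times> real" assume "x \<in> {0..1} \<times> {0..1}" "fst x = 1/2"
    then have "2 * fst x = 1" "2 * fst x - 1 = 0" "snd x \<in> {0..1}" by auto
    then show "H1 (2 * fst x, snd x) = H2 (2 * fst x - 1, snd x)" using H1(3) H2(3) by simp
  qed
  moreover have "\<forall>t\<in>{0..1}. arc_param X (\<lambda>s. G (t, s))"
  proof
    fix t :: real assume t: "t \<in> {0..1}"
    show "arc_param X (\<lambda>s. G (t, s))"
    proof (cases "t \<le> 1/2")
      case True
      then have "(\<lambda>s. G (t, s)) = (\<lambda>s. H1 (2 * t, s))" unfolding G_def by auto
      then show ?thesis using H1(2) t True by auto
    next
      case False
      then have "(\<lambda>s. G (t, s)) = (\<lambda>s. H2 (2 * t - 1, s))" unfolding G_def by auto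
      then show ?thesis using H2(2) t False by auto
    qed
  qed
  moreover have "\<forall>s\<in>{0..1}. G (0, s) = p s \<and> G (1, s) = r s"
    using H1(3) H2(3) unfolding G_def by auto
  ultimately show ?thesis unfolding param_isotopic_def by blast
qed

lemma param_isotopic_cong:
  assumes "param_isotopic X p q" "\<forall>s\<in>{0..1}. q s = q' s"
  shows "param_isotopic X p q'"
  using assms unfolding param_isotopic_def by simp

lemma arc_param_cong:
  assumes p: "arc_param X p" and pq: "\<forall>s\<in>{0..1}. p s = q s"
  shows "arc_param X q"
proof -
  have eq: "q ` {0..1} = p ` {0..1}" "q ` {0<..<1} = p ` {0<..<1}"
    using pq by (auto intro!: image_cong)
  obtain p' where hp: "homeomorphism {0<..<1} (p ` {0<..<1}) p p'"
    using p unfolding arc_param_def by blast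
  have "homeomorphism {0<..<1} (p ` {0<..<1}) q p'"
    by (rule homeomorphism_cong[OF hp]) (use pq in auto)
  moreover have "continuous_on {0..1} q"
    using p continuous_on_cong[of "{0..1}" "{0..1}" p q] pq unfolding arc_param_def by simp
  moreover have "q 0 = p 0" "q 1 = p 1" using pq by auto
  ultimately show ?thesis using p unfolding arc_param_def eq by auto
qed

lemma param_isotopic_arc_param:
  assumes "param_isotopic X p q"
  shows "arc_param X p" "arc_param X q"
proof -
  obtain H :: "real \<times> real \<Rightarrow> pt" where H: "\<forall>t\<in>{0..1}. arc_param X (\<lambda>s. H (t, s))"
      "\<forall>s\<in>{0..1}. H (0, s) = p s \<and> H (1, s) = q s"
    using assms unfolding param_isotopic_def by blast
  show "arc_param X p" using arc_param_cong[of X "\<lambda>s. H (0, s)" p] H by auto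
  show "arc_param X q" using arc_param_cong[of X "\<lambda>s. H (1, s)" q] H by auto
qed

lemma arc_param_homeomorphism_image:
  assumes p: "arc_param X p" and pA: "p ` {0..1} \<subseteq> A"
    and h: "homeomorphism A B \<phi> \<phi>'" and "B \<subseteq> S2"
    and X: "\<forall>x\<in>A. \<phi> x \<in> X \<longleftrightarrow> x \<in> X"
  shows "arc_param X (\<lambda>s. \<phi> (p s))"
  unfolding arc_param_def
proof (intro conjI)
  have pc: "continuous_on {0..1} p" and p01: "p 0 \<in> X" "p 1 \<in> X"
    and pX: "p ` {0<..<1} \<inter> X = {}"
    using p unfolding arc_param_def by auto
  obtain p' where hp: "homeomorphism {0<..<1} (p ` {0<..<1}) p p'"
    using p unfolding arc_param_def by auto
  have sub: "p ` {0<..<1} \<subseteq> A" using pA by auto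
  have "homeomorphism (p ` {0<..<1}) (\<phi> ` p ` {0<..<1}) \<phi> \<phi>'"
    by (rule homeomorphism_of_subsets[OF h sub]) (use homeomorphism_image1[OF h] sub in auto)
  then have "homeomorphism {0<..<1} (\<phi> ` p ` {0<..<1}) (\<phi> \<circ> p) (p' \<circ> \<phi>')"
    by (rule homeomorphism_compose[OF hp])
  then show "\<exists>k. homeomorphism {0<..<1} ((\<lambda>s. \<phi> (p s)) ` {0<..<1}) (\<lambda>s. \<phi> (p s)) k"
    by (auto simp: o_def image_image)
  show "continuous_on {0..1} (\<lambda>s. \<phi> (p s))"
    by (rule continuous_on_compose2[OF homeomorphism_cont1[OF h] pc pA])
  show "(\<lambda>s. \<phi> (p s)) ` {0..1} \<subseteq> S2"
    using pA homeomorphism_image1[OF h] \<open>B \<subseteq> S2\<close> by auto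
  have "p 0 \<in> A" "p 1 \<in> A" using pA by auto
  then show "\<phi> (p 0) \<in> X" "\<phi> (p 1) \<in> X" using X p01 by auto
  show "(\<lambda>s. \<phi> (p s)) ` {0<..<1} \<inter> X = {}"
  proof -
    have "p s \<notin> X" if "s \<in> {0<..<1}" for s using pX that by blast
    then show ?thesis using X sub by auto
  qed
qed

text \<open>Here "rel \<open>X\<close>" only asks that each point of \<open>A\<close> stays in \<open>X\<close> or stays out of it
  along the isotopy, rather than that \<open>X\<close> is fixed pointwise.\<close>

definition isotopy_rel :: "pt set \<Rightarrow> pt set \<Rightarrow> (real \<Rightarrow> pt \<Rightarrow> pt) \<Rightarrow> bool" where
  "isotopy_rel X A h \<longleftrightarrow> A \<subseteq> S2 \<and> continuous_on ({0..1} \<times> A) (\<lambda>(t, x). h t x) \<and>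
     (\<forall>t\<in>{0..1}. h t ` A \<subseteq> S2 \<and> (\<exists>k. homeomorphism A (h t ` A) (h t) k)) \<and>
     (\<forall>x\<in>A. h 0 x = x) \<and> (\<forall>t\<in>{0..1}. \<forall>x\<in>A. h t x \<in> X \<longleftrightarrow> x \<in> X)"

lemma isotopy_relD:
  assumes "isotopy_rel X A h"
  shows "A \<subseteq> S2" "continuous_on ({0..1} \<times> A) (\<lambda>(t, x). h t x)"
    and "\<And>t. t \<in> {0..1} \<Longrightarrow> h t ` A \<subseteq> S2" and "\<And>x. x \<in> A \<Longrightarrow> h 0 x = x"
    and "\<And>t x. t \<in> {0..1} \<Longrightarrow> x \<in> A \<Longrightarrow> h t x \<in> X \<longleftrightarrow> x \<in> X"
  using assms unfolding isotopy_rel_def by blast+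

lemma isotopy_rel_homeomorphism:
  assumes "isotopy_rel X A h" "t \<in> {0..1}"
  obtains k where "homeomorphism A (h t ` A) (h t) k"
  using assms unfolding isotopy_rel_def by blast

lemma arc_param_isotopy_image:
  assumes h: "isotopy_rel X A h" and t: "t \<in> {0..1}" and p: "arc_param X p" "p ` {0..1} \<subseteq> A"
  shows "arc_param X (\<lambda>s. h t (p s))"
proof -
  obtain k where k: "homeomorphism A (h t ` A) (h t) k" using h t by (rule isotopy_rel_homeomorphism)
  have "h t ` A \<subseteq> S2" "\<forall>x\<in>A. h t x \<in> X \<longleftrightarrow> x \<in> X" using isotopy_relD[OF h] t by simp_all
  then show ?thesis by (rule arc_param_homeomorphism_image[OF p k])
qed

lemma param_isotopic_isotopy_image:
  assumes h: "isotopy_rel X A h" and p: "arc_param X p" and pA: "p ` {0..1} \<subseteq> A"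
  shows "param_isotopic X p (\<lambda>s. h 1 (p s))"
proof -
  define H where "H = (\<lambda>x::real \<times> real. h (fst x) (p (snd x)))"
  have "continuous_on {0..1} p" using p unfolding arc_param_def by blast
  then have "continuous_on ({0..1} \<times> {0..1}) (\<lambda>x::real \<times> real. p (snd x))"
    by (rule continuous_on_compose2[OF _ continuous_on_snd]) auto
  then have "continuous_on ({0..1} \<times> {0..1}) (\<lambda>x::real \<times> real. (fst x, p (snd x)))"
    by (intro continuous_on_Pair continuous_on_fst continuous_on_id)
  then have "continuous_on ({0..1} \<times> {0..1}) (\<lambda>x. (\<lambda>(t, y). h t y) (fst x, p (snd x)))"
    by (rule continuous_on_compose2[OF isotopy_relD(2)[OF h]]) (use pA in auto)
  then have "continuous_on ({0..1} \<times> {0..1}) H" unfolding H_def by simp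
  moreover have "\<forall>t\<in>{0..1}. arc_param X (\<lambda>s. H (t, s))"
    unfolding H_def using arc_param_isotopy_image[OF h _ p pA] by simp
  moreover have "\<forall>s\<in>{0..1}. H (0, s) = p s \<and> H (1, s) = h 1 (p s)"
    unfolding H_def using isotopy_relD(4)[OF h] pA by (simp add: image_subset_iff)
  ultimately show ?thesis unfolding param_isotopic_def by blast
qed

lemma arc_isotopic_isotopy_image_iff:
  assumes h: "isotopy_rel X A h" and \<mu>: "\<mu> \<subseteq> A"
  shows "arc_isotopic X (h 1 ` \<mu>) \<rho> \<longleftrightarrow> arc_isotopic X \<mu> \<rho>"
proof
  have "(1::real) \<in> {0..1}" by simp
  with h obtain k where hk: "homeomorphism A (h 1 ` A) (h 1) k" by (rule isotopy_rel_homeomorphism)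
  assume "arc_isotopic X (h 1 ` \<mu>) \<rho>"
  then obtain q r where qr: "param_isotopic X q r" "h 1 ` \<mu> = q ` {0..1}" "\<rho> = r ` {0..1}"
    unfolding arc_isotopic_iff_param_isotopic by blast
  have q: "arc_param X q" using param_isotopic_arc_param(1)[OF qr(1)] .
  have qR: "q ` {0..1} \<subseteq> h 1 ` A" using qr(2) \<mu> by blast
  have "(\<lambda>s. k (q s)) ` {0..1} = k ` h 1 ` \<mu>" by (simp add: qr(2) image_image)
  also have "\<dots> = (\<lambda>x. k (h 1 x)) ` \<mu>" by (simp add: image_image)
  also have "\<dots> = (\<lambda>x. x) ` \<mu>" using \<mu> homeomorphism_apply1[OF hk] by (intro image_cong) auto
  also have "\<dots> = \<mu>" by simp
  finally have kq: "(\<lambda>s. k (q s)) ` {0..1} = \<mu>" .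
  have "arc_param X (\<lambda>s. k (q s))"
  proof (rule arc_param_homeomorphism_image[OF q qR homeomorphism_symD[OF hk]])
    show "A \<subseteq> S2" by (rule isotopy_relD(1)[OF h])
    show "\<forall>y\<in>h 1 ` A. k y \<in> X \<longleftrightarrow> y \<in> X"
    proof
      fix y assume "y \<in> h 1 ` A"
      then obtain x where "x \<in> A" "y = h 1 x" by blast
      moreover have "h 1 x \<in> X \<longleftrightarrow> x \<in> X" using isotopy_relD(5)[OF h] \<open>x \<in> A\<close> by simp
      ultimately show "k y \<in> X \<longleftrightarrow> y \<in> X" using homeomorphism_apply1[OF hk] by simp
    qed
  qed
  then have "param_isotopic X (\<lambda>s. k (q s)) (\<lambda>s. h 1 (k (q s)))"
    by (rule param_isotopic_isotopy_image[OF h]) (use kq \<mu> in simp)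
  then have "param_isotopic X (\<lambda>s. k (q s)) q"
    by (rule param_isotopic_cong) (use qR homeomorphism_apply2[OF hk] in blast)
  then have "param_isotopic X (\<lambda>s. k (q s)) r" using qr(1) by (rule param_isotopic_trans)
  then show "arc_isotopic X \<mu> \<rho>" unfolding arc_isotopic_iff_param_isotopic using kq qr(3) by blast
next
  assume "arc_isotopic X \<mu> \<rho>"
  then obtain p r where pr: "param_isotopic X p r" "\<mu> = p ` {0..1}" "\<rho> = r ` {0..1}"
    unfolding arc_isotopic_iff_param_isotopic by blast
  have "param_isotopic X p (\<lambda>s. h 1 (p s))"
    by (rule param_isotopic_isotopy_image[OF h param_isotopic_arc_param(1)[OF pr(1)]])
      (use pr(2) \<mu> in simp)
  then have "param_isotopic X (\<lambda>s. h 1 (p s)) r" using param_isotopic_sym param_isotopic_trans pr(1) by blast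
  moreover have "(\<lambda>s. h 1 (p s)) ` {0..1} = h 1 ` \<mu>" by (simp add: pr(2) image_image)
  ultimately show "arc_isotopic X (h 1 ` \<mu>) \<rho>"
    unfolding arc_isotopic_iff_param_isotopic using pr(3) by blast
qed

lemma arc_in_isotopy_image:
  assumes "isotopy_rel X A h" "\<mu> \<subseteq> A" "arc_in X \<mu>"
  shows "arc_in X (h 1 ` \<mu>)"
proof -
  obtain p where p: "arc_param X p" "\<mu> = p ` {0..1}"
    using assms(3) unfolding arc_in_def by blast
  have "arc_param X (\<lambda>s. h 1 (p s))"
    using arc_param_isotopy_image[OF assms(1) _ p(1)] p(2) assms(2) by simp
  moreover have "h 1 ` \<mu> = (\<lambda>s. h 1 (p s)) ` {0..1}" by (simp add: p(2) image_image)
  ultimately show ?thesis unfolding arc_in_def by blast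
qed

section \<open>Transporting lifts along a homeomorphism\<close>

text \<open>The image of a component \<open>C\<close> of \<open>Y\<close> is clopen in \<open>Z\<close>: open because \<open>C\<close> is open in
  \<open>Y\<close> and \<open>Z \<inter> R\<close> is open in \<open>Z\<close>, closed because it is the trace on \<open>Z\<close> of the compact image
  of the closure of \<open>C\<close>.\<close>

lemma connected_component_homeomorphic_image:
  fixes h :: "'a::topological_space \<Rightarrow> 'b::t2_space"
  assumes hom: "homeomorphism A R h k" and YZ: "h ` (Y \<inter> A) = Z \<inter> R"
    and ZR: "openin (top_of_set Z) (Z \<inter> R)" and x: "x \<in> Y"
    and C_open: "openin (top_of_set Y) (connected_component_set Y x)"
    and C_closure: "compact (closure (connected_component_set Y x))"
      "closure (connected_component_set Y x) \<subseteq> A"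
  shows "connected_component_set Z (h x) = h ` connected_component_set Y x"
proof -
  define C where "C = connected_component_set Y x"
  have CY: "C \<subseteq> Y" unfolding C_def by (rule connected_component_subset)
  have CA: "C \<subseteq> A" using C_closure(2) closure_subset unfolding C_def by blast
  have "openin (top_of_set (Z \<inter> R)) (h ` C)"
  proof (rule homeomorphism_imp_open_map)
    show "homeomorphism (Y \<inter> A) (Z \<inter> R) h k"
      by (rule homeomorphism_of_subsets[OF hom _ _ YZ]) auto
    show "openin (top_of_set (Y \<inter> A)) C"
      using C_open CY CA unfolding C_def[symmetric] by (blast intro: openin_subset_trans)
  qed
  then have "openin (top_of_set Z) (h ` C)" using ZR by (rule openin_trans)
  moreover have "h ` C = Z \<inter> h ` closure C"
  proof
    show "h ` C \<subseteq> Z \<inter> h ` closure C" using YZ CY CA closure_subset[of C] by blast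
    show "Z \<inter> h ` closure C \<subseteq> h ` C"
    proof
      fix z assume z: "z \<in> Z \<inter> h ` closure C"
      then obtain w where w: "w \<in> closure C" "z = h w" by blast
      then have "z \<in> h ` (Y \<inter> A)" using YZ z C_closure(2) homeomorphism_image1[OF hom]
        unfolding C_def by blast
      then obtain w' where w': "w' \<in> Y \<inter> A" "h w' = h w" using w(2) by blast
      then have "w' = w"
        using homeomorphism_apply1[OF hom] w(1) C_closure(2) unfolding C_def by (metis IntE subsetD)
      then have "w \<in> Y" using w' by blast
      moreover obtain T where "closed T" "C = Y \<inter> T"
        using closedin_connected_component[of Y x] unfolding C_def closedin_closed by blast
      ultimately have "w \<in> C" using w(1) closure_minimal[of C T] by blast
      then show "z \<in> h ` C" using w by blast
    qed
  qed
  then have "closedin (top_of_set Z) (h ` C)"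
    using compact_continuous_image[OF continuous_on_subset[OF homeomorphism_cont1[OF hom]] C_closure(1)]
      C_closure(2) unfolding C_def[symmetric] by (simp add: closedin_closed_Int compact_imp_closed)
  moreover have "connected (h ` C)"
    using connected_continuous_image[OF continuous_on_subset[OF homeomorphism_cont1[OF hom] CA]]
    unfolding C_def by simp
  moreover have "h x \<in> h ` C" unfolding C_def using x by simp
  ultimately show ?thesis unfolding C_def[symmetric] by (intro connected_component_eq_clopen)
qed

lemma lift_of_homeomorphism_image:
  assumes f: "continuous_on S2 f" "f ` S2 \<subseteq> S2" "\<forall>p\<in>S2. \<exists>k\<ge>1. local_form f p k"
    and q: "arc_param X q"
    and hk: "homeomorphism A R h1 k" and AS: "A \<subseteq> S2" and RS: "R \<subseteq> S2"
    and gh: "\<forall>w\<in>A. g (h1 w) = f w"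
    and U: "openin (top_of_set S2) U" "U \<subseteq> R" "\<forall>z\<in>R - U. g z \<in> X"
    and \<mu>: "lift_of f X (q ` {0..1}) \<mu>" "\<mu> \<subseteq> A"
  shows "lift_of g X (q ` {0..1}) (h1 ` \<mu>)"
proof -
  define Y where "Y = S2 \<inter> f -` (q ` {0..1} - X)"
  define Z where "Z = S2 \<inter> g -` (q ` {0..1} - X)"
  obtain x where x: "x \<in> Y" and \<mu>C: "\<mu> = closure (connected_component_set Y x)"
    using \<mu>(1) unfolding lift_of_def Y_def by blast
  have YZ: "h1 ` (Y \<inter> A) = Z \<inter> R"
  proof
    show "h1 ` (Y \<inter> A) \<subseteq> Z \<inter> R"
      using gh homeomorphism_image1[OF hk] RS unfolding Y_def Z_def by auto
    show "Z \<inter> R \<subseteq> h1 ` (Y \<inter> A)"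
    proof
      fix z assume z: "z \<in> Z \<inter> R"
      then have "k z \<in> A" "h1 (k z) = z"
        using homeomorphism_image2[OF hk] homeomorphism_apply2[OF hk] by auto
      then have "k z \<in> Y" using z gh AS unfolding Y_def Z_def by force
      then show "z \<in> h1 ` (Y \<inter> A)" using \<open>k z \<in> A\<close> \<open>h1 (k z) = z\<close> by force
    qed
  qed
  have "openin (top_of_set Z) (Z \<inter> R)"
  proof -
    obtain G where "open G" "U = S2 \<inter> G" using U(1) by (auto simp: openin_open)
    moreover have "Z \<inter> R = Z \<inter> U" using U(2,3) unfolding Z_def by blast
    ultimately have "Z \<inter> R = Z \<inter> G" unfolding Z_def by blast
    then show ?thesis using \<open>open G\<close> by (simp add: openin_open_Int)
  qed
  moreover have "openin (top_of_set Y) (connected_component_set Y x)"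
    unfolding Y_def using openin_lift_component[OF f q] by blast
  moreover have "compact \<mu>"
  proof -
    have "connected_component_set Y x \<subseteq> S2"
      using connected_component_subset unfolding Y_def by blast
    then have "bounded (connected_component_set Y x)"
      using bounded_subset[of S2] unfolding S2_def by simp
    then show ?thesis unfolding \<mu>C by (simp add: compact_closure)
  qed
  ultimately have component: "connected_component_set Z (h1 x) = h1 ` connected_component_set Y x"
    using connected_component_homeomorphic_image[OF hk YZ _ x] \<mu> unfolding \<mu>C by blast
  have closure: "closure (h1 ` connected_component_set Y x) = h1 ` \<mu>"
    using \<open>compact \<mu>\<close> continuous_on_subset[OF homeomorphism_cont1[OF hk] \<mu>(2)] unfolding \<mu>C
    by (rule closure_image_compact_closure)
  have "x \<in> connected_component_set Y x" using x by simp
  then have "h1 x \<in> connected_component_set Z (h1 x)" unfolding component by blast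
  then have "h1 x \<in> Z" using connected_component_subset by blast
  moreover have "h1 ` \<mu> = closure (connected_component_set Z (h1 x))" using closure component by simp
  ultimately show ?thesis unfolding lift_of_def Z_def[symmetric] by blast
qed

lemma arc_system_image:
  assumes L: "arc_system X L" and arcs: "\<forall>\<mu>\<in>L. arc_in X (\<Phi> \<mu>)"
    and iso: "\<forall>\<mu>\<in>L. \<forall>\<rho>. arc_isotopic X (\<Phi> \<mu>) \<rho> \<longleftrightarrow> arc_isotopic X \<mu> \<rho>"
  shows "arc_system X (\<Phi> ` L)"
  unfolding arc_system_def
proof (intro conjI ballI impI)
  show "arc_in X \<nu>" if "\<nu> \<in> \<Phi> ` L" for \<nu> using that arcs by blast
  fix \<nu>1 \<nu>2 assume \<nu>: "\<nu>1 \<in> \<Phi> ` L" "\<nu>2 \<in> \<Phi> ` L" "\<nu>1 \<noteq> \<nu>2"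
  then obtain \<mu>1 \<mu>2 where \<mu>: "\<mu>1 \<in> L" "\<mu>2 \<in> L" "\<nu>1 = \<Phi> \<mu>1" "\<nu>2 = \<Phi> \<mu>2" "\<mu>1 \<noteq> \<mu>2" by blast
  show "\<not> arc_isotopic X \<nu>1 \<nu>2"
  proof
    assume "arc_isotopic X \<nu>1 \<nu>2"
    then have "arc_isotopic X \<nu>2 \<mu>1" using iso \<mu> arc_isotopic_sym by blast
    then have "arc_isotopic X \<mu>1 \<mu>2" using iso \<mu> arc_isotopic_sym by blast
    then show False using L \<mu> unfolding arc_system_def by blast
  qed
qed

lemma sys_isotopic_image:
  assumes iso: "\<forall>\<mu>\<in>L. \<forall>\<rho>. arc_isotopic X (\<Phi> \<mu>) \<rho> \<longleftrightarrow> arc_isotopic X \<mu> \<rho>"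
    and L: "sys_isotopic X L \<Lambda>"
  shows "sys_isotopic X (\<Phi> ` L) \<Lambda>"
  unfolding sys_isotopic_def
proof (intro conjI ballI)
  fix \<nu> assume "\<nu> \<in> \<Phi> ` L"
  then obtain \<mu> where "\<mu> \<in> L" "\<nu> = \<Phi> \<mu>" by blast
  then show "\<exists>!\<rho>. \<rho> \<in> \<Lambda> \<and> arc_isotopic X \<nu> \<rho>"
    using L iso unfolding sys_isotopic_def by simp
next
  have iso': "arc_isotopic X \<rho> (\<Phi> \<mu>) \<longleftrightarrow> arc_isotopic X \<rho> \<mu>" if "\<mu> \<in> L" for \<mu> \<rho>
    using iso that arc_isotopic_sym by blast
  fix \<rho> assume "\<rho> \<in> \<Lambda>"
  then obtain \<mu> where \<mu>: "\<mu> \<in> L" "arc_isotopic X \<rho> \<mu>"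
    and unique: "\<And>\<mu>'. \<mu>' \<in> L \<Longrightarrow> arc_isotopic X \<rho> \<mu>' \<Longrightarrow> \<mu>' = \<mu>"
    using L unfolding sys_isotopic_def by metis
  show "\<exists>!\<nu>. \<nu> \<in> \<Phi> ` L \<and> arc_isotopic X \<rho> \<nu>"
  proof (rule ex1I[of _ "\<Phi> \<mu>"])
    show "\<Phi> \<mu> \<in> \<Phi> ` L \<and> arc_isotopic X \<rho> (\<Phi> \<mu>)" using \<mu> iso' by blast
    fix \<nu> assume "\<nu> \<in> \<Phi> ` L \<and> arc_isotopic X \<rho> \<nu>"
    then show "\<nu> = \<Phi> \<mu>" using unique iso' by blast
  qed
qed

lemma forward_invariant_isotopy_transfer:
  assumes f: "continuous_on S2 f" "f ` S2 \<subseteq> S2" "\<forall>p\<in>S2. \<exists>k\<ge>1. local_form f p k"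
    and h: "isotopy_rel X A h" and gh: "\<forall>w\<in>A. g (h 1 w) = f w"
    and U: "openin (top_of_set S2) U" "U \<subseteq> h 1 ` A" "\<forall>z\<in>h 1 ` A - U. g z \<in> X"
    and \<Lambda>: "arc_system X \<Lambda>" "\<Lambda>0 \<subseteq> \<Lambda>"
    and L: "lift_system f X \<Lambda>0 L" "sys_isotopic X L \<Lambda>" "\<Union>L \<subseteq> A"
  shows "forward_invariant g X \<Lambda>"
proof -
  have iso: "\<forall>\<mu>\<in>L. \<forall>\<rho>. arc_isotopic X (h 1 ` \<mu>) \<rho> \<longleftrightarrow> arc_isotopic X \<mu> \<rho>"
    using arc_isotopic_isotopy_image_iff[OF h] L(3) by blast
  have "arc_system X ((\<lambda>\<mu>. h 1 ` \<mu>) ` L)"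
  proof (rule arc_system_image[OF _ _ iso])
    show "arc_system X L" using L(1) unfolding lift_system_def by blast
    then show "\<forall>\<mu>\<in>L. arc_in X (h 1 ` \<mu>)"
      using arc_in_isotopy_image[OF h] L(3) unfolding arc_system_def by blast
  qed
  moreover have "\<forall>\<nu>\<in>(\<lambda>\<mu>. h 1 ` \<mu>) ` L. \<exists>\<gamma>\<in>\<Lambda>0. lift_of g X \<gamma> \<nu>"
  proof
    fix \<nu> assume "\<nu> \<in> (\<lambda>\<mu>. h 1 ` \<mu>) ` L"
    then obtain \<mu> where \<mu>: "\<mu> \<in> L" "\<nu> = h 1 ` \<mu>" by blast
    then obtain \<gamma> where \<gamma>: "\<gamma> \<in> \<Lambda>0" "lift_of f X \<gamma> \<mu>"
      using L(1) unfolding lift_system_def by blast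
    have "arc_in X \<gamma>" using \<Lambda> \<gamma>(1) unfolding arc_system_def by blast
    then obtain q where q: "arc_param X q" "\<gamma> = q ` {0..1}" unfolding arc_in_def by blast
    have one: "(1::real) \<in> {0..1}" by simp
    with h obtain k where hk: "homeomorphism A (h 1 ` A) (h 1) k" by (rule isotopy_rel_homeomorphism)
    have "\<mu> \<subseteq> A" using \<mu>(1) L(3) by blast
    then have "lift_of g X \<gamma> (h 1 ` \<mu>)"
      using lift_of_homeomorphism_image[OF f q(1) hk isotopy_relD(1)[OF h] isotopy_relD(3)[OF h one] gh U]
        \<gamma>(2) q(2) by blast
    then show "\<exists>\<gamma>\<in>\<Lambda>0. lift_of g X \<gamma> \<nu>" using \<gamma>(1) \<mu>(2) by blast
  qed
  moreover have "sys_isotopic X ((\<lambda>\<mu>. h 1 ` \<mu>) ` L) \<Lambda>" using iso L(2) by (rule sys_isotopic_image)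
  ultimately show ?thesis unfolding forward_invariant_def lift_system_def using \<Lambda>(2) by blast
qed

section \<open>The blown-up map\<close>

text \<open>Reading one of the arcs in the parameter of \<open>j\<close> gives an injective continuous map of
  \<open>{0<..<1}\<close> into \<open>{0..1}\<close>; by invariance of domain its image is open, hence misses the
  endpoints \<open>0\<close> and \<open>1\<close>. So the endpoints of \<open>j\<close> are endpoints of the arcs, which lie in \<open>Y\<close>.\<close>

lemma arc_union_endpoint_mem:
  fixes j :: "real \<Rightarrow> pt"
  assumes jc: "continuous_on {0..1} j" and ji: "inj_on j {0..1}"
    and arcs: "\<forall>\<beta>\<in>B. arc_in Y \<beta>" and cover: "j ` {0..1} = \<Union>B" and e: "e \<in> {0, 1}"
  shows "j e \<in> Y"
proof -
  have "j e \<in> \<Union>B" using cover e by auto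
  then obtain \<beta> where \<beta>: "\<beta> \<in> B" "j e \<in> \<beta>" by blast
  have "arc_in Y \<beta>" using arcs \<beta>(1) by blast
  then obtain q where q: "arc_param Y q" "\<beta> = q ` {0..1}" unfolding arc_in_def by blast
  have "j e \<in> q ` {0..1}" using \<beta>(2) q(2) by simp
  then obtain s0 where s0: "s0 \<in> {0..1}" "q s0 = j e" by (metis imageE)
  show ?thesis
  proof (cases "s0 \<in> {0<..<1}")
    case False
    then have "s0 = 0 \<or> s0 = 1" using s0(1) by auto
    then show ?thesis using q(1) s0(2) unfolding arc_param_def by auto
  next
    case True
    obtain j' where hj: "homeomorphism {0..1} (j ` {0..1}) j j'"
      using homeomorphism_compact[OF compact_Icc jc refl ji] by blast
    have qj: "q ` {0..1} \<subseteq> j ` {0..1}" unfolding cover q(2)[symmetric] using \<beta>(1) by blast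
    have qc: "continuous_on {0..1} q" using q(1) unfolding arc_param_def by blast
    define \<sigma> where "\<sigma> = (\<lambda>s. j' (q s))"
    have "continuous_on {0..1} \<sigma>"
      unfolding \<sigma>_def by (rule continuous_on_compose2[OF homeomorphism_cont2[OF hj] qc qj])
    then have "continuous_on {0<..<1} \<sigma>" by (rule continuous_on_subset) auto
    moreover have "inj_on \<sigma> {0<..<1}"
    proof (rule inj_onI)
      fix s t assume st: "s \<in> {0<..<1}" "t \<in> {0<..<1}" "\<sigma> s = \<sigma> t"
      then have "q s \<in> j ` {0..1}" "q t \<in> j ` {0..1}" using qj by auto
      then have "q s = q t"
        using st(3) homeomorphism_apply2[OF hj] unfolding \<sigma>_def by metis
      then show "s = t" using arc_param_inj_interior[OF q(1) st(1,2)] by blast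
    qed
    ultimately have "open (\<sigma> ` {0<..<1})" by (intro invariance_of_domain) auto
    moreover have "\<sigma> ` {0<..<1} \<subseteq> {0..1}"
    proof (rule image_subsetI)
      fix s :: real assume "s \<in> {0<..<1}"
      then have "q s \<in> j ` {0..1}" using qj by auto
      then show "\<sigma> s \<in> {0..1}" unfolding \<sigma>_def using homeomorphism_image2[OF hj] by blast
    qed
    ultimately have "\<sigma> ` {0<..<1} \<subseteq> {0<..<1}"
      using interior_maximal[of "\<sigma> ` {0<..<1}" "{0..1}"] by simp
    moreover have "\<sigma> s0 = e" unfolding \<sigma>_def using s0(2) homeomorphism_apply1[OF hj] e by auto
    ultimately have "e \<in> {0<..<1}" using True by blast
    then show ?thesis using e by simp
  qed
qed

lemma blowing_up_endpoints:
  assumes "blowing_up_conditions f X j" "e \<in> {0, 1}"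
  shows "j e \<in> S2" "f (j e) \<in> X" "j e \<notin> j ` {0<..<1}"
proof -
  have jc: "continuous_on {0..1} j" and ji: "inj_on j {0..1}"
    using assms(1) unfolding blowing_up_conditions_def by simp_all
  have "\<exists>(L::nat) as. L \<ge> 1 \<and> (\<forall>i<L. arc_in (S2 \<inter> f -` X) (as i)) \<and> j ` {0..1} = (\<Union>i<L. as i)"
    using assms(1) unfolding blowing_up_conditions_def by simp
  then obtain L as where arcs: "\<forall>i<(L::nat). arc_in (S2 \<inter> f -` X) (as i)"
    and cover: "j ` {0..1} = (\<Union>i<L. as i)"
    by blast
  have "j e \<in> S2 \<inter> f -` X"
    by (rule arc_union_endpoint_mem[OF jc ji _ cover assms(2)]) (use arcs in blast)
  then show "j e \<in> S2" "f (j e) \<in> X" by auto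
  show "j e \<notin> j ` {0<..<1}"
  proof
    assume "j e \<in> j ` {0<..<1}"
    then obtain s where s: "s \<in> {0<..<1}" "j e = j s" by blast
    then have "e = s" by (intro inj_onD[OF ji s(2)]) (use assms(2) in auto)
    then show False using assms(2) s by auto
  qed
qed

lemma marked_points_outside_disc:
  assumes "marked_bc f X" "blowing_up_conditions f X j"
    and W: "{j 0, j 1} \<subseteq> closure W - W"
      "closure W \<inter> (S2 \<inter> f -` X) = j ` {0..1} \<inter> (S2 \<inter> f -` X)"
  shows "X \<inter> W = {}"
proof (rule ccontr)
  have XS: "X \<subseteq> S2" and fX: "f ` X \<subseteq> X" using assms(1) unfolding marked_bc_def by simp_all
  have "j ` {0<..<1} \<inter> (X \<union> crit f) = {}"
    using assms(2) unfolding blowing_up_conditions_def by simp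
  then have IX: "j ` {0<..<1} \<inter> X = {}" by blast
  assume "X \<inter> W \<noteq> {}"
  then obtain x where x: "x \<in> X" "x \<in> W" by blast
  then have "x \<in> closure W \<inter> (S2 \<inter> f -` X)" using closure_subset XS fX by blast
  then obtain s where s: "s \<in> {0..1}" "x = j s" using W(2) by blast
  then have "s \<notin> {0<..<1}" using IX x(1) by blast
  then have "x \<in> {j 0, j 1}" using s by auto
  then show False using W(1) x(2) by blast
qed

lemma homeomorphism_ball_avoids_boundary_points:
  assumes "homeomorphism (cball (0::complex) 1) D \<psi> \<psi>'" "E \<subseteq> \<psi> ` sphere 0 1"
  shows "\<psi> ` ball 0 1 \<subseteq> D - E"
proof -
  have "\<psi> a \<noteq> \<psi> b" if "a \<in> ball 0 1" "b \<in> sphere 0 1" for a b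
  proof
    assume "\<psi> a = \<psi> b"
    then have "a = b" using homeomorphism_apply1[OF assms(1)] that
      by (metis ball_subset_cball sphere_cball subsetD)
    then show False using that by simp
  qed
  then have "\<psi> ` ball 0 1 \<inter> \<psi> ` sphere 0 1 = {}" by blast
  then show ?thesis using homeomorphism_image1[OF assms(1)] assms(2) by fastforce
qed

lemma isotopy_relI:
  assumes "A \<subseteq> S2" "continuous_on ({0..1} \<times> A) (\<lambda>(t, x). h t x)"
    and hom: "\<forall>t\<in>{0..1}. h t ` A \<subseteq> S2 \<and> (\<exists>k. homeomorphism A (h t ` A) (h t) k)"
    and "\<forall>x\<in>A. h 0 x = x" and "X \<subseteq> A" and fixed: "\<forall>t\<in>{0..1}. \<forall>x\<in>X. h t x = x"
  shows "isotopy_rel X A h"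
proof -
  have "h t x \<in> X \<longleftrightarrow> x \<in> X" if t: "t \<in> {0..1}" and x: "x \<in> A" for t x
  proof
    show "h t x \<in> X" if "x \<in> X" using fixed t that by simp
    assume "h t x \<in> X"
    moreover obtain k where "homeomorphism A (h t ` A) (h t) k" using hom t by blast
    ultimately have "h t x = x"
      using fixed t x \<open>X \<subseteq> A\<close> by (metis homeomorphism_apply1 subsetD)
    then show "x \<in> X" using \<open>h t x \<in> X\<close> by simp
  qed
  then show ?thesis using assms(1-4) unfolding isotopy_rel_def by blast
qed

lemma blown_up_parts:
  assumes "blown_up f X j n g"
  defines "A \<equiv> S2 - j ` {0<..<1}"
  obtains W D \<psi> \<psi>' h c where
    "{j 0, j 1} \<subseteq> closure W - W"
    "closure W \<inter> (S2 \<inter> f -` X) = j ` {0..1} \<inter> (S2 \<inter> f -` X)"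
    "homeomorphism (cball (0::complex) 1) D \<psi> \<psi>'" "{j 0, j 1} \<subseteq> \<psi> ` sphere 0 1"
    "continuous_on ({0..1::real} \<times> A) (\<lambda>(t, x). h t x)"
    "\<forall>t\<in>{0..1}. h t ` A \<subseteq> S2 \<and> (\<exists>k. homeomorphism A (h t ` A) (h t) k)"
    "\<forall>x\<in>A. h 0 x = x" "\<forall>t\<in>{0..1}. \<forall>x\<in>A - W. h t x = x"
    "h 1 ` A = S2 - (D - {j 0, j 1})"
    "\<forall>x\<in>S2 - (D - {j 0, j 1}). c x = inv_into A (h 1) x"
    "\<forall>x\<in>S2 - \<psi> ` ball 0 1. g x = f (c x)"
  using assms unfolding blown_up_def Let_def A_def by (elim exE conjE) (rule that[unfolded A_def]; assumption)

lemma blown_up_isotopy: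
  assumes mbc: "marked_bc f X" and buc: "blowing_up_conditions f X j" and bu: "blown_up f X j n g"
  defines "A \<equiv> S2 - j ` {0<..<1}"
  obtains h U where "isotopy_rel X A h" "\<forall>w\<in>A. g (h 1 w) = f w"
    "openin (top_of_set S2) U" "U \<subseteq> h 1 ` A" "\<forall>z\<in>h 1 ` A - U. g z \<in> X"
proof -
  have XS: "X \<subseteq> S2" using mbc unfolding marked_bc_def by simp
  have "j ` {0<..<1} \<inter> (X \<union> crit f) = {}"
    using buc unfolding blowing_up_conditions_def by simp
  then have IX: "j ` {0<..<1} \<inter> X = {}" by blast
  obtain W D \<psi> \<psi>' h c where
    W: "{j 0, j 1} \<subseteq> closure W - W"
       "closure W \<inter> (S2 \<inter> f -` X) = j ` {0..1} \<inter> (S2 \<inter> f -` X)" and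
    D: "homeomorphism (cball (0::complex) 1) D \<psi> \<psi>'" "{j 0, j 1} \<subseteq> \<psi> ` sphere 0 1" and
    hc: "continuous_on ({0..1::real} \<times> A) (\<lambda>(t, x). h t x)" and
    hom: "\<forall>t\<in>{0..1}. h t ` A \<subseteq> S2 \<and> (\<exists>k. homeomorphism A (h t ` A) (h t) k)" and
    h0: "\<forall>x\<in>A. h 0 x = x" and
    hW: "\<forall>t\<in>{0..1}. \<forall>x\<in>A - W. h t x = x" and
    h1: "h 1 ` A = S2 - (D - {j 0, j 1})" and
    c: "\<forall>x\<in>S2 - (D - {j 0, j 1}). c x = inv_into A (h 1) x" and
    g: "\<forall>x\<in>S2 - \<psi> ` ball 0 1. g x = f (c x)"
    by (rule blown_up_parts[OF bu, folded A_def])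
  have "j e \<in> A - W \<and> f (j e) \<in> X" if "e \<in> {0, 1}" for e
    using blowing_up_endpoints[OF buc that] W(1) that unfolding A_def by auto
  from this[of 0] this[of 1] have ends: "\<forall>e\<in>{j 0, j 1}. e \<in> A - W \<and> f e \<in> X" by simp
  have XW: "X \<inter> W = {}" by (rule marked_points_outside_disc[OF mbc buc W])
  have XA: "X \<subseteq> A - W" using XS XW IX unfolding A_def by blast
  have iso: "isotopy_rel X A h"
  proof (rule isotopy_relI[OF _ hc hom h0])
    show "A \<subseteq> S2" "X \<subseteq> A" using XA unfolding A_def by blast+
    show "\<forall>t\<in>{0..1}. \<forall>x\<in>X. h t x = x" using hW XA by blast
  qed
  have "(1::real) \<in> {0..1}" by simp
  with iso obtain k where hk: "homeomorphism A (h 1 ` A) (h 1) k" by (rule isotopy_rel_homeomorphism)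
  have gh: "g (h 1 w) = f w" if w: "w \<in> A" for w
  proof -
    have "h 1 w \<in> S2 - (D - {j 0, j 1})" using h1 w by blast
    moreover have "\<psi> ` ball 0 1 \<subseteq> D - {j 0, j 1}"
      by (rule homeomorphism_ball_avoids_boundary_points[OF D])
    ultimately have "h 1 w \<in> S2 - \<psi> ` ball 0 1" by blast
    then have "g (h 1 w) = f (c (h 1 w))" using g by blast
    also have "c (h 1 w) = inv_into A (h 1) (h 1 w)" using c \<open>h 1 w \<in> S2 - (D - {j 0, j 1})\<close> by blast
    also have "inv_into A (h 1) (h 1 w) = w"
      using homeomorphism_apply1[OF hk] w by (metis inj_on_inverseI inv_into_f_f)
    finally show ?thesis .
  qed
  have "compact D"
    using compact_continuous_image[OF homeomorphism_cont1[OF D(1)] compact_cball]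
    by (simp add: homeomorphism_image1[OF D(1)])
  then have "open (- D)" by (simp add: compact_imp_closed open_Compl)
  then have "openin (top_of_set S2) (S2 - D)" using openin_open_Int[of "- D" S2] by (simp add: Diff_eq)
  moreover have "\<forall>z\<in>h 1 ` A - (S2 - D). g z \<in> X"
  proof
    fix z assume "z \<in> h 1 ` A - (S2 - D)"
    then have "z \<in> {j 0, j 1}" using h1 by blast
    then have "z \<in> A" "h 1 z = z" "f z \<in> X" using ends hW by auto
    then show "g z \<in> X" using gh by metis
  qed
  ultimately show ?thesis using that iso gh h1 by blast
qed

lemma arc_in_subset_S2:
  assumes "arc_in Y \<mu>"
  shows "\<mu> \<subseteq> S2"
proof -
  obtain p where "arc_param Y p" "\<mu> = p ` {0..1}" using assms unfolding arc_in_def by blast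
  then show ?thesis by (simp add: arc_param_def)
qed

theorem mainTheorem6:
  fixes f g :: "pt \<Rightarrow> pt" and X :: "pt set" and j :: "real \<Rightarrow> pt"
    and n :: nat and \<Lambda> :: "pt set set"
  assumes "marked_bc f X"
    and "blowing_up_conditions f X j"
    and "n \<ge> 1"
    and "blown_up f X j n g"
    and "arc_system X \<Lambda>"
    and "forward_invariant f X \<Lambda>"
    and "\<exists>\<Lambda>0 \<subseteq> \<Lambda>. \<exists>L. lift_system f X \<Lambda>0 L \<and> sys_isotopic X L \<Lambda> \<and>
           (\<Union>L) \<inter> j ` {0<..<1} = {}"
  shows "forward_invariant g X \<Lambda>"
proof -
  have f: "continuous_on S2 f" "f ` S2 \<subseteq> S2" "\<forall>p\<in>S2. \<exists>k\<ge>1. local_form f p k"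
    using assms(1) unfolding marked_bc_def branched_covering_def by blast+
  obtain h U where h: "isotopy_rel X (S2 - j ` {0<..<1}) h"
    "\<forall>w\<in>S2 - j ` {0<..<1}. g (h 1 w) = f w" and
    U: "openin (top_of_set S2) U" "U \<subseteq> h 1 ` (S2 - j ` {0<..<1})"
      "\<forall>z\<in>h 1 ` (S2 - j ` {0<..<1}) - U. g z \<in> X"
    by (rule blown_up_isotopy[OF assms(1,2,4)])
  obtain \<Lambda>0 L where L: "\<Lambda>0 \<subseteq> \<Lambda>" "lift_system f X \<Lambda>0 L" "sys_isotopic X L \<Lambda>"
    and avoid: "(\<Union>L) \<inter> j ` {0<..<1} = {}"
    using assms(7) by blast
  have "\<forall>\<mu>\<in>L. arc_in X \<mu>" using L(2) unfolding lift_system_def arc_system_def by simp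
  then have "\<Union>L \<subseteq> S2" using arc_in_subset_S2 by blast
  then have "\<Union>L \<subseteq> S2 - j ` {0<..<1}" using avoid by blast
  then show ?thesis
    by (rule forward_invariant_isotopy_transfer[OF f h U assms(5) L])
qed

end
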